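(* Let $N=\{1,\dots,n\}$, let $\tilde Q\in\mathbb{R}^{n\times n}$ be symmetric positive definite, $\tilde d\in\mathbb{R}^n$, and $a,b\in\mathbb{R}^n$ with $b\le a$ componentwise. Let $A,B\subseteq N$ be disjoint, $I=N\setminus(A\cup B)$, and let $(x,s,t)$ be the KKT solution for $(A,B)$. Let $C=\{i: x_i<b_i \text{ or } s_i<0\}$, $D=\{i: x_i>a_i \text{ or } t_i>0\}$, and let $(y,u,v)$ be the KKT solution for $(C,D)$. Let $U=\{i\in I: x_i<b_i\}$, $V=\{i\in I: x_i>a_i\}$, $W=U\cup V$, $\overline W=N\setminus W$ and $z=y-x$. Then $$\tilde J(y)-\tilde J(x)=\tfrac12\, z_W^{\top}\tilde Q_W z_W-\tfrac12\, z_{\overline W}^{\top}\tilde Q_{\overline W} z_{\overline W},$$ where $\tilde J(w)=\tfrac12 w^{\top}\tilde Q w+\tilde d^{\top}w$.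
   Context: For disjoint $A_1,A_2\subseteq N$, the KKT solution for $(A_1,A_2)$ is the unique triple $(x,s,t)\in(\mathbb{R}^n)^3$ with $x_{A_1}=b_{A_1}$, $x_{A_2}=a_{A_2}$, $s_i=0$ for $i\notin A_1$, $t_i=0$ for $i\notin A_2$, and $\tilde Qx+\tilde d+s+t=0$ (unique since $\tilde Q\succ0$). The sets $C$ and $D$ defined in the claim are disjoint. For $M\subseteq N$, $z_M$ denotes the subvector of $z$ indexed by $M$ and $\tilde Q_M$ the principal submatrix of $\tilde Q$ indexed by $M$. *)

theory Defs
  imports "HOL-Analysis.Analysis"
begin

text \<open>Vectors in R^n are modelled as real^'n with the finite index type 'n playing N.\<close>

definition sym_pd :: "real^'n^'n \<Rightarrow> bool" where
  "sym_pd Q \<longleftrightarrow> transpose Q = Q \<and> (\<forall>x. x \<noteq> 0 \<longrightarrow> x \<bullet> (Q *v x) > 0)"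

definition is_KKT_sol ::
  "real^'n^'n \<Rightarrow> real^'n \<Rightarrow> real^'n \<Rightarrow> real^'n \<Rightarrow> 'n set \<Rightarrow> 'n set
     \<Rightarrow> real^'n \<Rightarrow> real^'n \<Rightarrow> real^'n \<Rightarrow> bool" where
  "is_KKT_sol Q d a b A1 A2 x s t \<longleftrightarrow>
     (\<forall>i\<in>A1. x$i = b$i) \<and> (\<forall>i\<in>A2. x$i = a$i) \<and>
     (\<forall>i. i \<notin> A1 \<longrightarrow> s$i = 0) \<and> (\<forall>i. i \<notin> A2 \<longrightarrow> t$i = 0) \<and>
     Q *v x + d + s + t = 0"

definition sub_quad :: "real^'n^'n \<Rightarrow> 'n set \<Rightarrow> real^'n \<Rightarrow> real" where
  "sub_quad Q M z = (\<Sum>i\<in>M. \<Sum>j\<in>M. z$i * Q$i$j * z$j)"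

definition Jt :: "real^'n^'n \<Rightarrow> real^'n \<Rightarrow> real^'n \<Rightarrow> real" where
  "Jt Q d w = (1/2) * (w \<bullet> (Q *v w)) + d \<bullet> w"

end

theory Submission
  imports Defs
begin

text \<open>Put z = y - x. Since the KKT equation for x gives Q x + d = -(s + t), the increment of the
  objective is J(y) - J(x) = z'Qz/2 - z'(s + t). The multipliers s + t vanish on the free indices W,
  and off W the new multipliers u + v are complementary to z, so there s + t may be replaced by
  Qz = (s + t) - (u + v). Hence z'(s + t) is the row block of z'Qz belonging to the complement
  of W; splitting z'Qz into its two diagonal blocks and the symmetric off-diagonal block gives
  the identity.\<close>

lemma inner_matrix_vector_mult_eq_sum:
  fixes Q :: "real^'n^'m"
  shows "x \<bullet> (Q *v y) = (\<Sum>i\<in>UNIV. \<Sum>j\<in>UNIV. x$i * Q$i$j * y$j)"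
  by (simp add: inner_vec_def matrix_vector_mult_def sum_distrib_left mult.assoc)

lemma symmetric_matrix_entry:
  assumes "transpose Q = Q"
  shows "Q$i$j = Q$j$i"
  using arg_cong[OF assms, of "\<lambda>M. M$j$i"] by (simp add: transpose_def)

lemma symmetric_matrix_inner_commute:
  fixes Q :: "real^'n^'n"
  assumes "transpose Q = Q"
  shows "x \<bullet> (Q *v y) = y \<bullet> (Q *v x)"
  by (metis assms dot_lmul_matrix vector_transpose_matrix inner_commute)

lemma sum_UNIV_split:
  "(\<Sum>i\<in>(UNIV::'n::finite set). f i) = sum f M + sum f (UNIV - M)"
  using sum.Int_Diff[of "UNIV::'n set" f M] by simp

lemma partial_quadratic_form_split:
  fixes Q :: "real^'n^'n" and z :: "real^'n"
  shows "(\<Sum>i\<in>UNIV - W. z$i * (Q *v z)$i)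
           = sub_quad Q (UNIV - W) z + (\<Sum>i\<in>UNIV - W. \<Sum>j\<in>W. z$i * Q$i$j * z$j)"
proof -
  have "(\<Sum>i\<in>UNIV - W. z$i * (Q *v z)$i) = (\<Sum>i\<in>UNIV - W. \<Sum>j\<in>UNIV. z$i * Q$i$j * z$j)"
    by (simp add: matrix_vector_mult_def sum_distrib_left mult.assoc)
  also have "\<dots> = (\<Sum>i\<in>UNIV - W. (\<Sum>j\<in>W. z$i * Q$i$j * z$j)
                                  + (\<Sum>j\<in>UNIV - W. z$i * Q$i$j * z$j))"
    by (rule sum.cong[OF refl], rule sum_UNIV_split)
  finally show ?thesis by (simp add: sum.distrib sub_quad_def)
qed

lemma quadratic_form_split:
  fixes Q :: "real^'n^'n" and z :: "real^'n"
  assumes "transpose Q = Q"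
  shows "z \<bullet> (Q *v z) = sub_quad Q W z + sub_quad Q (UNIV - W) z
           + 2 * (\<Sum>i\<in>UNIV - W. \<Sum>j\<in>W. z$i * Q$i$j * z$j)"
proof -
  define P where "P i j = z$i * Q$i$j * z$j" for i j
  have "P i j = P j i" for i j
    unfolding P_def using symmetric_matrix_entry[OF assms, of i j] by simp
  then have cross: "(\<Sum>i\<in>W. \<Sum>j\<in>UNIV - W. P i j) = (\<Sum>i\<in>UNIV - W. \<Sum>j\<in>W. P i j)"
    by (subst sum.swap) simp
  have "z \<bullet> (Q *v z) = (\<Sum>i\<in>UNIV. \<Sum>j\<in>UNIV. P i j)"
    by (simp add: inner_matrix_vector_mult_eq_sum P_def)
  also have "\<dots> = (\<Sum>i\<in>UNIV. (\<Sum>j\<in>W. P i j) + (\<Sum>j\<in>UNIV - W. P i j))"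
    by (rule sum.cong[OF refl], rule sum_UNIV_split)
  also have "\<dots> = (\<Sum>i\<in>W. (\<Sum>j\<in>W. P i j) + (\<Sum>j\<in>UNIV - W. P i j))
                + (\<Sum>i\<in>UNIV - W. (\<Sum>j\<in>W. P i j) + (\<Sum>j\<in>UNIV - W. P i j))"
    by (rule sum_UNIV_split)
  finally show ?thesis
    using cross by (simp add: sum.distrib sub_quad_def P_def[symmetric])
qed

lemma Jt_increment:
  fixes Q :: "real^'n^'n"
  assumes "transpose Q = Q"
  shows "Jt Q d (x + z) - Jt Q d x = (1/2) * (z \<bullet> (Q *v z)) + z \<bullet> (Q *v x + d)"
proof -
  have "(x + z) \<bullet> (Q *v (x + z)) = x \<bullet> (Q *v x) + 2 * (z \<bullet> (Q *v x)) + z \<bullet> (Q *v z)"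
    using symmetric_matrix_inner_commute[OF assms, of x z]
    by (simp add: matrix_vector_right_distrib inner_add_left inner_add_right)
  moreover have "d \<bullet> (x + z) = d \<bullet> x + z \<bullet> d"
    by (simp add: inner_add_right inner_commute)
  ultimately show ?thesis
    unfolding Jt_def by (simp add: inner_add_right ring_distribs)
qed

lemma Jt_increment_complementary:
  fixes Q :: "real^'n^'n" and d x z p q :: "real^'n"
  assumes "transpose Q = Q"
    and "Q *v x + d + p = 0" and "Q *v (x + z) + d + q = 0"
    and "\<And>i. i \<in> W \<Longrightarrow> p$i = 0"
    and "\<And>i. i \<notin> W \<Longrightarrow> z$i * q$i = 0"
  shows "Jt Q d (x + z) - Jt Q d x = (1/2) * sub_quad Q W z - (1/2) * sub_quad Q (UNIV - W) z"
proof -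
  have "Q *v z = (Q *v (x + z) + d + q) - (Q *v x + d + p) + p - q"
    by (simp add: matrix_vector_right_distrib algebra_simps)
  then have Qz: "Q *v z = p - q"
    using assms(2,3) by simp
  have "z$i * p$i = (if i \<in> UNIV - W then z$i * (Q *v z)$i else 0)" for i
    using assms(4,5)[of i] by (simp add: Qz algebra_simps)
  then have "z \<bullet> p = (\<Sum>i\<in>UNIV - W. z$i * (Q *v z)$i)"
    by (simp add: inner_vec_def sum.If_cases set_diff_eq)
  moreover have "Q *v x + d = - p"
    using assms(2) by (simp add: eq_neg_iff_add_eq_0 add.assoc)
  ultimately show ?thesis
    using Jt_increment[OF assms(1), of d x z] quadratic_form_split[OF assms(1), of z W]
      partial_quadratic_form_split[of z Q W]
    by (simp add: field_simps)
qed

lemma KKT_step_complementarity: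
  fixes Q :: "real^'n^'n" and d a b x s t y u v :: "real^'n"
  assumes "b$i \<le> a$i"
    and "A \<inter> B = {}"
    and "is_KKT_sol Q d a b A B x s t"
    and "is_KKT_sol Q d a b {i. x$i < b$i \<or> s$i < 0} {i. x$i > a$i \<or> t$i > 0} y u v"
    and "i \<in> A \<or> i \<in> B \<or> b$i \<le> x$i \<and> x$i \<le> a$i"
  shows "(y$i - x$i) * (u$i + v$i) = 0"
proof -
  have to_lower: "y$i = b$i" if "x$i < b$i \<or> s$i < 0"
    using assms(4) that by (auto simp: is_KKT_sol_def)
  have to_upper: "y$i = a$i" if "x$i > a$i \<or> t$i > 0"
    using assms(4) that by (auto simp: is_KKT_sol_def)
  have stays_free: "u$i = 0" "v$i = 0"
    if "\<not> (x$i < b$i \<or> s$i < 0)" "\<not> (x$i > a$i \<or> t$i > 0)"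
    using assms(4) that by (auto simp: is_KKT_sol_def)
  consider (lower_active) "i \<in> A" | (upper_active) "i \<in> B"
    | (inactive) "i \<notin> A" "i \<notin> B" "b$i \<le> x$i" "x$i \<le> a$i"
    using assms(5) by blast
  then show ?thesis
  proof cases
    case lower_active
    then have "x$i = b$i" "t$i = 0"
      using assms(2,3) by (auto simp: is_KKT_sol_def)
    then show ?thesis
      using to_lower stays_free assms(1) by (cases "s$i < 0") auto
  next
    case upper_active
    then have "x$i = a$i" "s$i = 0"
      using assms(2,3) by (auto simp: is_KKT_sol_def)
    then show ?thesis
      using to_upper stays_free assms(1) by (cases "t$i > 0") auto
  next
    case inactive
    then have "s$i = 0" "t$i = 0"
      using assms(3) by (auto simp: is_KKT_sol_def)
    then show ?thesis
      using stays_free inactive by simp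
  qed
qed

theorem mainTheorem1:
  fixes Q :: "real^'n^'n" and d a b x s t y u v :: "real^'n" and A B :: "'n set"
  assumes "sym_pd Q"
    and "\<forall>i. b$i \<le> a$i"
    and "A \<inter> B = {}"
    and "is_KKT_sol Q d a b A B x s t"
    and "is_KKT_sol Q d a b {i. x$i < b$i \<or> s$i < 0} {i. x$i > a$i \<or> t$i > 0} y u v"
  shows "let I = UNIV - (A \<union> B);
             U = {i\<in>I. x$i < b$i};
             V = {i\<in>I. x$i > a$i};
             W = U \<union> V;
             z = y - x
         in Jt Q d y - Jt Q d x = (1/2) * sub_quad Q W z - (1/2) * sub_quad Q (UNIV - W) z"
proof -
  define W where "W = {i\<in>UNIV - (A \<union> B). x$i < b$i} \<union> {i\<in>UNIV - (A \<union> B). x$i > a$i}"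
  have "Jt Q d (x + (y - x)) - Jt Q d x
          = (1/2) * sub_quad Q W (y - x) - (1/2) * sub_quad Q (UNIV - W) (y - x)"
  proof (rule Jt_increment_complementary)
    show "transpose Q = Q"
      using assms(1) by (simp add: sym_pd_def)
    show "Q *v x + d + (s + t) = 0" "Q *v (x + (y - x)) + d + (u + v) = 0"
      using assms(4,5) by (simp_all add: is_KKT_sol_def add.assoc)
    show "(s + t)$i = 0" if "i \<in> W" for i
      using assms(4) that by (auto simp: is_KKT_sol_def W_def)
    show "(y - x)$i * (u + v)$i = 0" if "i \<notin> W" for i
      using KKT_step_complementarity[OF _ assms(3-5)] assms(2) that
      by (auto simp: W_def not_less)
  qed
  then show ?thesis
    unfolding Let_def W_def by simp
qed

end
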